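(* Let $\boldsymbol J=(J_x)_{x\in\Sigma}$ be weights on $\Sigma=\mathsf V\cup\mathsf E$ (the vertices and nearest-neighbour edges of $\mathbb Z^d$) which are almost surely generic, and let $M$ and $M'$ be ground states for $\boldsymbol J$ in $\mathbb Z^d$. Then (almost surely) $M\,\Delta\,M'$ is a disjoint union of simple infinite and bi-infinite paths.
   Context: A matching of $\mathbb Z^d$ is a set $M\subset\Sigma$ such that every vertex either belongs to $M$ or is an endpoint of exactly one edge of $M$, but not both. For matchings $M,M'$ with $M\Delta M'$ finite, $H(M)-H(M')=\sum_{x\in M\setminus M'}J_x-\sum_{y\in M'\setminus M}J_y$. $M$ is a ground state of $\boldsymbol J$ if there is no matching $M'$ with $M\Delta M'$ finite and $H(M)-H(M')>0$. Weights are generic if for every finite $S\subset\Sigma$ and integers $(k_x)_{x\in S}$ not all zero, $\sum_{x\in S}k_xJ_x\ne0$. A simple infinite path is a sequence $(v_1,(v_1,v_2),(v_2,v_3),\dots)$ with the $v_i$ distinct and $v_i\sim v_{i+1}$; a bi-infinite path is a bi-infinite sequence of edges $(\dots,(v_{-1},v_0),(v_0,v_1),(v_1,v_2),\dots)$ with the $v_i$ distinct. *)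

theory Defs
  imports "HOL-Analysis.Finite_Cartesian_Product"
begin

text \<open>Vertices of Z^d are vectors int^'d ('d a finite index type, d = CARD('d)).
  A site is either a vertex (Inl v) or an edge (Inr e), an edge being the
  two-element set of its endpoints.\<close>

type_synonym 'd vtx = "int ^ 'd"
type_synonym 'd site = "'d vtx + 'd vtx set"

definition adj :: "'d::finite vtx \<Rightarrow> 'd vtx \<Rightarrow> bool" where
  "adj u v \<longleftrightarrow> (\<Sum>i\<in>UNIV. \<bar>u $ i - v $ i\<bar>) = 1"

definition Edges :: "'d::finite vtx set set" where
  "Edges = {{u, v} | u v. adj u v}"

definition Sigma_sites :: "'d::finite site set" where
  "Sigma_sites = range Inl \<union> Inr ` Edges"

definition is_matching :: "'d::finite site set \<Rightarrow> bool" where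
  "is_matching M \<longleftrightarrow> M \<subseteq> Sigma_sites \<and>
     (\<forall>v. (Inl v \<in> M \<and> (\<forall>e. Inr e \<in> M \<longrightarrow> v \<notin> e)) \<or>
          (Inl v \<notin> M \<and> (\<exists>!e. Inr e \<in> M \<and> v \<in> e)))"

definition Hdiff :: "('d::finite site \<Rightarrow> real) \<Rightarrow> 'd site set \<Rightarrow> 'd site set \<Rightarrow> real" where
  "Hdiff J M M' = (\<Sum>x\<in>M - M'. J x) - (\<Sum>y\<in>M' - M. J y)"

definition ground_state :: "('d::finite site \<Rightarrow> real) \<Rightarrow> 'd site set \<Rightarrow> bool" where
  "ground_state J M \<longleftrightarrow> is_matching M \<and>
     \<not> (\<exists>M'. is_matching M' \<and> finite (M \<union> M' - M \<inter> M') \<and> Hdiff J M M' > 0)"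

definition generic :: "('d::finite site \<Rightarrow> real) \<Rightarrow> bool" where
  "generic J \<longleftrightarrow> (\<forall>S k. finite S \<and> S \<subseteq> Sigma_sites \<and> (\<exists>x\<in>S. k x \<noteq> (0::int))
                     \<longrightarrow> (\<Sum>x\<in>S. of_int (k x) * J x) \<noteq> 0)"

definition simple_inf_path :: "'d::finite site set \<Rightarrow> bool" where
  "simple_inf_path P \<longleftrightarrow> (\<exists>v :: nat \<Rightarrow> 'd vtx. inj v \<and> (\<forall>i. adj (v i) (v (Suc i))) \<and>
      P = {Inl (v 0)} \<union> range (\<lambda>i. Inr {v i, v (Suc i)}))"

definition biinf_path :: "'d::finite site set \<Rightarrow> bool" where
  "biinf_path P \<longleftrightarrow> (\<exists>v :: int \<Rightarrow> 'd vtx. inj v \<and> (\<forall>i. adj (v i) (v (i + 1))) \<and>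
      P = range (\<lambda>i. Inr {v i, v (i + 1)}))"

end

theory Submission
  imports Defs "HOL-Library.Disjoint_Sets"
begin

text \<open>Start at a vertex where M and M' disagree and alternately move to the M-partner and to the
  M'-partner. The sites traversed form a component of M \<Delta> M', and this component is closed: every
  vertex it covers has both its M-site and its M'-site in it. Were it finite, exchanging M and M'
  on it would give competitors to both ground states; the two energy inequalities together force
  a vanishing integer combination of weights, contradicting genericity. So the walk visits
  infinitely many vertices, and it can never return to a vertex after an even number of steps,
  since it would then be periodic. Between monomers the checkerboard colour of Z^d alternates,
  which rules out returns after an odd number of steps; a monomer reflects the walk, and two
  monomers would again make it periodic. Hence the component is a bi-infinite path, or a
  one-sided path starting at its only monomer.\<close>

lemma adj_irrefl: "\<not> adj (v::'d::finite vtx) v"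
  by (simp add: adj_def)

lemma adj_sym: "adj (u::'d::finite vtx) v \<Longrightarrow> adj v u"
  unfolding adj_def by (simp add: abs_minus_commute)

definition covers :: "'d::finite site \<Rightarrow> 'd vtx \<Rightarrow> bool" where
  "covers s v \<longleftrightarrow> s = Inl v \<or> (\<exists>e. s = Inr e \<and> v \<in> e)"

lemma is_matching_iff_unique_cover:
  "is_matching N \<longleftrightarrow> N \<subseteq> Sigma_sites \<and> (\<forall>v. \<exists>!s. s \<in> N \<and> covers s v)"
proof -
  have "((Inl v \<in> N \<and> (\<forall>e. Inr e \<in> N \<longrightarrow> v \<notin> e)) \<or> (Inl v \<notin> N \<and> (\<exists>!e. Inr e \<in> N \<and> v \<in> e)))
     \<longleftrightarrow> (\<exists>!s. s \<in> N \<and> covers s v)" for v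
    unfolding covers_def by (safe; metis Inl_Inr_False sum.inject)
  then show ?thesis unfolding is_matching_def by simp
qed

lemma Sigma_site_covers:
  assumes "s \<in> (Sigma_sites :: 'd::finite site set)" obtains w where "covers s w"
  using assms unfolding Sigma_sites_def Edges_def covers_def by blast

definition cover_site :: "'d::finite site set \<Rightarrow> 'd vtx \<Rightarrow> 'd site" where
  "cover_site N v = (THE s. s \<in> N \<and> covers s v)"

definition partner :: "'d::finite site set \<Rightarrow> 'd vtx \<Rightarrow> 'd vtx" where
  "partner N v = (case cover_site N v of Inl _ \<Rightarrow> v | Inr e \<Rightarrow> (THE w. w \<in> e \<and> w \<noteq> v))"

context
  fixes N :: "'d::finite site set"
  assumes N: "is_matching N"
begin

lemma matching_subset_Sigma: "N \<subseteq> Sigma_sites"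
  using N by (simp add: is_matching_iff_unique_cover)

lemma cover_site_in: "cover_site N v \<in> N" and covers_cover_site: "covers (cover_site N v) v"
  using theI'[of "\<lambda>s. s \<in> N \<and> covers s v"] N
  unfolding cover_site_def is_matching_iff_unique_cover by auto

lemma cover_site_unique: "s \<in> N \<Longrightarrow> covers s v \<Longrightarrow> cover_site N v = s"
  using N unfolding cover_site_def is_matching_iff_unique_cover by (simp add: the1_equality)

lemma cover_site_eq_iff: "covers s v \<Longrightarrow> cover_site N v = s \<longleftrightarrow> s \<in> N"
  using cover_site_unique cover_site_in by blast

lemma cover_site_cases:
  "cover_site N v = Inl v \<and> partner N v = v \<or>
   cover_site N v = Inr {v, partner N v} \<and> adj v (partner N v)"
proof (cases "cover_site N v")
  case (Inl x)
  then show ?thesis using covers_cover_site[of v] by (simp add: covers_def partner_def)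
next
  case (Inr e)
  then obtain a b where ab: "e = {a, b}" "adj a b"
    using cover_site_in[of v] matching_subset_Sigma
    unfolding Sigma_sites_def Edges_def by auto
  moreover have "v \<in> e" using covers_cover_site[of v] Inr by (simp add: covers_def)
  ultimately obtain w where w: "e = {v, w}" "adj v w" "w \<noteq> v"
    using adj_sym adj_irrefl by blast
  then have "partner N v = w" using Inr by (auto simp: partner_def)
  then show ?thesis using Inr w by simp
qed

lemma cover_site_partner: "cover_site N (partner N v) = cover_site N v"
  using cover_site_cases[of v] by (intro cover_site_unique cover_site_in) (auto simp: covers_def)

lemma partner_partner: "partner N (partner N v) = v"
  using cover_site_cases[of v] cover_site_cases[of "partner N v"] cover_site_partner[of v] adj_irrefl
  by (auto simp: doubleton_eq_iff)

end

lemma swap_closed_is_matching: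
  assumes M: "is_matching M" and M': "is_matching M'"
    and C: "C \<subseteq> sym_diff M M'"
    and closed: "\<And>t w. t \<in> C \<Longrightarrow> covers t w \<Longrightarrow> cover_site M w \<in> C \<and> cover_site M' w \<in> C"
  shows "is_matching ((M - C) \<union> (C \<inter> M'))"
  unfolding is_matching_iff_unique_cover
proof (intro conjI allI)
  show "M - C \<union> C \<inter> M' \<subseteq> Sigma_sites"
    using matching_subset_Sigma[OF M] matching_subset_Sigma[OF M'] by blast
next
  fix v
  show "\<exists>!s. s \<in> M - C \<union> C \<inter> M' \<and> covers s v"
  proof (cases "\<exists>t\<in>C. covers t v")
    case True
    then have "cover_site M v \<in> C" "cover_site M' v \<in> C" using closed by blast+
    then show ?thesis
      using cover_site_in[OF M'] covers_cover_site[OF M'] cover_site_unique[OF M] cover_site_unique[OF M']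
      by (intro ex1I[of _ "cover_site M' v"]) blast+
  next
    case False
    then show ?thesis
      using cover_site_in[OF M] covers_cover_site[OF M] cover_site_unique[OF M]
      by (intro ex1I[of _ "cover_site M v"]) blast+
  qed
qed

lemma generic_sum_Int_neq_sum_Diff:
  assumes "generic J" "finite C" "C \<noteq> {}" "C \<subseteq> Sigma_sites"
  shows "sum J (C \<inter> A) \<noteq> sum J (C - A)"
proof
  assume eq: "sum J (C \<inter> A) = sum J (C - A)"
  define k where "k x = (if x \<in> A then 1 else (-1::int))" for x
  have "(\<Sum>x\<in>C. of_int (k x) * J x) = (\<Sum>x\<in>C. if x \<in> A then J x else - J x)"
    by (rule sum.cong) (auto simp: k_def)
  also have "\<dots> = sum J (C \<inter> A) - sum J (C - A)"
    using assms(2) by (simp add: sum.If_cases sum_negf Diff_eq)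
  moreover have "\<exists>x\<in>C. k x \<noteq> 0" using assms(3) by (auto simp: k_def)
  ultimately show False using assms eq unfolding generic_def by auto
qed

lemma ground_states_no_finite_closed_diff:
  assumes gen: "generic J" and gs: "ground_state J M" and gs': "ground_state J M'"
    and C: "C \<subseteq> sym_diff M M'" "finite C"
    and closed: "\<And>t w. t \<in> C \<Longrightarrow> covers t w \<Longrightarrow> cover_site M w \<in> C \<and> cover_site M' w \<in> C"
  shows "C = {}"
proof (rule ccontr)
  assume "C \<noteq> {}"
  have M: "is_matching M" and M': "is_matching M'" using gs gs' by (auto simp: ground_state_def)
  define N where "N = (M - C) \<union> (C \<inter> M')"
  define N' where "N' = (M' - C) \<union> (C \<inter> M)"
  have "is_matching N" unfolding N_def using swap_closed_is_matching[OF M M' C(1) closed] .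
  moreover have "finite (M \<union> N - M \<inter> N)"
    by (rule finite_subset[OF _ C(2)]) (use C(1) in \<open>auto simp: N_def\<close>)
  ultimately have le: "\<not> Hdiff J M N > 0" using gs unfolding ground_state_def by blast
  have "is_matching N'" unfolding N'_def
    by (rule swap_closed_is_matching[OF M' M]) (use C(1) closed in auto)
  moreover have "finite (M' \<union> N' - M' \<inter> N')"
    by (rule finite_subset[OF _ C(2)]) (use C(1) in \<open>auto simp: N'_def\<close>)
  ultimately have le': "\<not> Hdiff J M' N' > 0" using gs' unfolding ground_state_def by blast
  have diffs: "M - N = C \<inter> M" "N - M = C - M" "M' - N' = C - M" "N' - M' = C \<inter> M"
    using C(1) by (auto simp: N_def N'_def)
  have "sum J (C \<inter> M) = sum J (C - M)" using le le' unfolding Hdiff_def diffs by linarith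
  moreover have "C \<subseteq> Sigma_sites"
    using C(1) matching_subset_Sigma[OF M] matching_subset_Sigma[OF M'] by blast
  ultimately show False using generic_sum_Int_neq_sum_Diff[OF gen C(2) \<open>C \<noteq> {}\<close>] by blast
qed

lemma involution_walk_exists:
  assumes "\<And>i x. \<sigma> i (\<sigma> i x) = x"
  shows "\<exists>v::int \<Rightarrow> 'a. v 0 = x0 \<and> (\<forall>i. v (i + 1) = \<sigma> i (v i))"
proof -
  define fw where "fw = rec_nat x0 (\<lambda>n w. \<sigma> (int n) w)"
  define bw where "bw = rec_nat x0 (\<lambda>n w. \<sigma> (- int n - 1) w)"
  define v where "v i = (if i \<ge> 0 then fw (nat i) else bw (nat (- i)))" for i
  have "v (i + 1) = \<sigma> i (v i)" for i
  proof (cases "i \<ge> 0")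
    case True
    then have "nat (i + 1) = Suc (nat i)" by simp
    then show ?thesis using True by (simp add: v_def fw_def)
  next
    case False
    define n where "n = nat (- i - 1)"
    have i: "i = - int n - 1" using False by (simp add: n_def)
    have "v i = \<sigma> i (bw n)" using False by (simp add: v_def i nat_add_distrib bw_def)
    moreover have "v (i + 1) = bw n"
      by (cases "n = 0") (simp_all add: v_def i bw_def fw_def)
    ultimately show ?thesis using assms by simp
  qed
  moreover have "v 0 = x0" by (simp add: v_def fw_def)
  ultimately show ?thesis by blast
qed

definition even_vertex :: "'d::finite vtx \<Rightarrow> bool" where
  "even_vertex w \<longleftrightarrow> even (\<Sum>k\<in>UNIV. w $ k)"

lemma adj_even_vertex:
  assumes "adj u w" shows "even_vertex u \<longleftrightarrow> \<not> even_vertex w"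
proof -
  have "even (\<Sum>k\<in>UNIV. \<bar>u $ k - w $ k\<bar> - (u $ k - w $ k))"
    by (rule dvd_sum) (auto simp: abs_if)
  then have "odd ((\<Sum>k\<in>UNIV. u $ k) - (\<Sum>k\<in>UNIV. w $ k))"
    using assms by (simp add: adj_def sum_subtractf)
  then show ?thesis unfolding even_vertex_def by auto
qed

lemma equiv_trancl:
  assumes "r \<subseteq> A \<times> A" "refl_on A r" "sym r" shows "equiv A (r\<^sup>+)"
proof (rule equivI)
  show "r\<^sup>+ \<subseteq> A \<times> A" using assms(1) by (rule trancl_subset_Sigma)
  show "refl_on A (r\<^sup>+)" using assms(2) by (auto simp: refl_on_def)
  show "sym (r\<^sup>+)" using assms(3) by (rule sym_trancl)
qed simp

text \<open>The components of M \<Delta> M' are the classes of the transitive closure of touching (M \<Delta> M').\<close>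
definition touching :: "'d::finite site set \<Rightarrow> 'd site rel" where
  "touching D = {(s, t). s \<in> D \<and> t \<in> D \<and> (\<exists>w. covers s w \<and> covers t w)}"

lemma equiv_touching_trancl: "D \<subseteq> Sigma_sites \<Longrightarrow> equiv D ((touching D)\<^sup>+)"
  by (rule equiv_trancl)
    (auto simp: touching_def refl_on_def sym_def elim: Sigma_site_covers)

text \<open>Staying put at a monomer counts as a step, so the index parity always tells which matching
  is followed next.\<close>
locale alternating_walk =
  fixes M M' :: "'d::finite site set" and v :: "int \<Rightarrow> 'd vtx"
  assumes matching_M: "is_matching M" and matching_M': "is_matching M'"
    and walk_step: "\<And>i. v (i + 1) = partner (if even i then M else M') (v i)"
    and start_in_diff: "cover_site M (v 0) \<noteq> cover_site M' (v 0)"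
begin

definition step_matching :: "int \<Rightarrow> 'd site set" where
  "step_matching i = (if even i then M else M')"

lemma is_matching_step: "is_matching (step_matching i)"
  using matching_M matching_M' by (simp add: step_matching_def)

lemma step_matching_cong: "even i = even j \<Longrightarrow> step_matching i = step_matching j"
  by (simp add: step_matching_def)

lemma v_succ: "v (i + 1) = partner (step_matching i) (v i)"
  using walk_step by (simp add: step_matching_def)

lemma v_pred: "v (i - 1) = partner (step_matching (i - 1)) (v i)"
  using v_succ[of "i - 1"] partner_partner[OF is_matching_step] by simp

definition walk_site :: "int \<Rightarrow> 'd site" where
  "walk_site i = cover_site (step_matching i) (v i)"

lemma walk_site_succ: "walk_site i = cover_site (step_matching i) (v (i + 1))"
  unfolding walk_site_def v_succ by (simp only: cover_site_partner[OF is_matching_step])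

lemma covers_walk_site: "covers (walk_site i) (v i)" "covers (walk_site i) (v (i + 1))"
proof -
  show "covers (walk_site i) (v i)"
    unfolding walk_site_def by (rule covers_cover_site[OF is_matching_step])
  show "covers (walk_site i) (v (i + 1))"
    unfolding walk_site_succ by (rule covers_cover_site[OF is_matching_step])
qed

lemma walk_site_cases:
  "walk_site i = Inl (v i) \<and> v (i + 1) = v i \<or>
   walk_site i = Inr {v i, v (i + 1)} \<and> adj (v i) (v (i + 1))"
  using cover_site_cases[OF is_matching_step, of i "v i"] by (simp add: walk_site_def v_succ)

lemma covers_walk_site_only: "covers (walk_site i) w \<Longrightarrow> w = v i \<or> w = v (i + 1)"
  using walk_site_cases[of i] by (auto simp: covers_def)

lemma cover_sites_agree_iff:
  assumes "covers (walk_site i) w"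
  shows "cover_site M w = cover_site M' w \<longleftrightarrow> walk_site i \<in> M \<inter> M'"
proof -
  have "cover_site (step_matching i) w = walk_site i"
    using cover_site_unique[OF is_matching_step _ assms] cover_site_in[OF is_matching_step]
    by (simp add: walk_site_def)
  then show ?thesis
    using cover_site_eq_iff[OF matching_M assms] cover_site_eq_iff[OF matching_M' assms]
    by (auto simp: step_matching_def split: if_splits)
qed

lemma cover_sites_differ: "cover_site M (v i) \<noteq> cover_site M' (v i)"
proof (induction i rule: int_induct[where k=0])
  case base show ?case using start_in_diff .
next
  case (step1 i) then show ?case
    using cover_sites_agree_iff[OF covers_walk_site(1)] cover_sites_agree_iff[OF covers_walk_site(2)] by blast
next
  case (step2 i) then show ?case
    using cover_sites_agree_iff[OF covers_walk_site(1), of "i - 1"]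
      cover_sites_agree_iff[OF covers_walk_site(2), of "i - 1"] by simp
qed

lemma walk_site_in_diff: "walk_site i \<in> sym_diff M M'"
proof -
  have "walk_site i \<in> step_matching i"
    unfolding walk_site_def by (rule cover_site_in[OF is_matching_step])
  then have "walk_site i \<in> M \<union> M'" by (simp add: step_matching_def split: if_splits)
  then show ?thesis
    using cover_sites_agree_iff[OF covers_walk_site(1)] cover_sites_differ by blast
qed

lemma cover_site_in_walk_sites:
  "cover_site M (v j) \<in> range walk_site" "cover_site M' (v j) \<in> range walk_site"
proof -
  have "cover_site (step_matching j) (v j) = walk_site j"
    "cover_site (step_matching (j - 1)) (v j) = walk_site (j - 1)"
    using walk_site_succ[of "j - 1"] by (simp_all add: walk_site_def)
  then show "cover_site M (v j) \<in> range walk_site" "cover_site M' (v j) \<in> range walk_site"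
    by (cases "even j"; force simp: step_matching_def)+
qed

lemma walk_sites_closed:
  "t \<in> range walk_site \<Longrightarrow> covers t w \<Longrightarrow>
   cover_site M w \<in> range walk_site \<and> cover_site M' w \<in> range walk_site"
  using covers_walk_site_only cover_site_in_walk_sites by blast

lemma finite_walk_sites: "finite (range v) \<Longrightarrow> finite (range walk_site)"
  by (rule finite_subset[of _ "cover_site M ` range v \<union> cover_site M' ` range v"])
    (auto simp: walk_site_def step_matching_def)

lemma finite_range_if_return:
  assumes ij: "v i = v j" "i < j" "even i = even j"
  shows "finite (range v)"
proof -
  have "\<exists>l\<in>{i..<j}. v k = v l \<and> even k = even l" for k
  proof (induction k rule: int_induct[where k=i])
    case base then show ?case using ij by (intro bexI[of _ i]) auto
  next
    case (step1 k)
    then obtain l where l: "l \<in> {i..<j}" "v k = v l" "even k = even l" by blast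
    then have "v (k + 1) = v (l + 1)" using v_succ[of k] v_succ[of l] step_matching_cong[OF l(3)] by simp
    moreover have "l + 1 < j \<or> l + 1 = j" using l(1) by auto
    ultimately show ?case using l ij by (intro bexI[of _ "if l + 1 < j then l + 1 else i"]) auto
  next
    case (step2 k)
    then obtain l where l: "l \<in> {i..<j}" "v k = v l" "even k = even l" by blast
    have "v (k - 1) = v (l - 1)"
      using l v_pred[of k] v_pred[of l] step_matching_cong[of "k - 1" "l - 1"] by auto
    moreover have "v (i - 1) = v (j - 1)"
      using ij v_pred[of i] v_pred[of j] step_matching_cong[of "i - 1" "j - 1"] by auto
    moreover have "i < l \<or> i = l" using l(1) by auto
    ultimately show ?case using l ij by (intro bexI[of _ "if i < l then l - 1 else j - 1"]) auto
  qed
  then have "range v \<subseteq> v ` {i..<j}" by blast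
  then show ?thesis using finite_subset by blast
qed

definition monomer_at :: "int \<Rightarrow> bool" where
  "monomer_at i \<longleftrightarrow> (\<exists>x. walk_site i = Inl x)"

lemma walk_site_monomer: "monomer_at i \<Longrightarrow> walk_site i = Inl (v i) \<and> v (i + 1) = v i"
  using walk_site_cases[of i] by (auto simp: monomer_at_def)

lemma walk_site_edge:
  "\<not> monomer_at i \<Longrightarrow> walk_site i = Inr {v i, v (i + 1)} \<and> adj (v i) (v (i + 1))"
  using walk_site_cases[of i] by (auto simp: monomer_at_def)

lemma v_reflect_at_monomer:
  assumes "monomer_at i" shows "v (i - int k) = v (i + 1 + int k)"
proof (induction k)
  case 0 then show ?case using walk_site_monomer[OF assms] by simp
next
  case (Suc k)
  have "even (i - int k - 1) = even (i + 1 + int k)"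
    by presburger
  then have "v (i - int k - 1) = v (i + 1 + int k + 1)"
    using Suc v_pred[of "i - int k"] v_succ[of "i + 1 + int k"] step_matching_cong by metis
  then show ?case by (simp add: algebra_simps)
qed

lemma walk_site_reflect_at_monomer:
  assumes "monomer_at i" shows "walk_site (i - 1 - int k) = walk_site (i + 1 + int k)"
proof -
  have "even (i - 1 - int k) = even (i + 1 + int k)" by presburger
  moreover have "v (i - 1 - int k) = v (i + 1 + int k + 1)"
    using v_reflect_at_monomer[OF assms, of "Suc k"] by (simp add: algebra_simps)
  ultimately show ?thesis
    unfolding walk_site_def using walk_site_succ walk_site_def step_matching_cong by metis
qed

lemma finite_range_if_two_monomers:
  assumes "monomer_at i" "monomer_at j" "i < j" shows "finite (range v)"
proof -
  have "v (2 * i - j) = v (j + 1)"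
    using v_reflect_at_monomer[OF assms(1), of "nat (j - i)"] assms(3) by (simp add: algebra_simps)
  also have "\<dots> = v j" using walk_site_monomer[OF assms(2)] by simp
  finally show ?thesis
    by (rule finite_range_if_return) (use assms(3) in auto)
qed

lemma even_vertex_alternates:
  assumes "a \<le> b" and "\<And>k. a \<le> k \<Longrightarrow> k < b \<Longrightarrow> \<not> monomer_at k"
  shows "even_vertex (v b) \<longleftrightarrow> (even_vertex (v a) \<longleftrightarrow> even (b - a))"
  using assms
proof (induction b rule: int_ge_induct)
  case (step b)
  then show ?case
    using adj_even_vertex[OF conjunct2[OF walk_site_edge[of b]]] by auto
qed simp

lemma touching_walk_site_succ: "(walk_site i, walk_site (i + 1)) \<in> touching (sym_diff M M')"
  using covers_walk_site(2)[of i] covers_walk_site(1)[of "i + 1"] walk_site_in_diff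
  unfolding touching_def by blast

lemma touching_walk_sites_closed:
  assumes "(s, t) \<in> touching (sym_diff M M')" "s \<in> range walk_site"
  shows "t \<in> range walk_site"
proof -
  obtain w where w: "covers s w" "covers t w" and t: "t \<in> sym_diff M M'"
    using assms(1) by (auto simp: touching_def)
  then have "t = cover_site M w \<or> t = cover_site M' w"
    using cover_site_unique[OF matching_M _ w(2)] cover_site_unique[OF matching_M' _ w(2)] by blast
  then show ?thesis using walk_sites_closed[OF assms(2) w(1)] by blast
qed

lemma touching_class_walk_sites:
  "(touching (sym_diff M M'))\<^sup>+ `` {walk_site k} = range walk_site"
proof
  show "(touching (sym_diff M M'))\<^sup>+ `` {walk_site k} \<subseteq> range walk_site"
  proof
    fix t assume "t \<in> (touching (sym_diff M M'))\<^sup>+ `` {walk_site k}"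
    then have "(walk_site k, t) \<in> (touching (sym_diff M M'))\<^sup>+" by simp
    then show "t \<in> range walk_site"
      by (induction rule: trancl_induct) (blast intro: touching_walk_sites_closed rangeI)+
  qed
next
  have "(walk_site k, walk_site j) \<in> (touching (sym_diff M M'))\<^sup>+" for j
  proof (induction j rule: int_induct[where k=k])
    case base
    have "(walk_site k, walk_site k) \<in> touching (sym_diff M M')"
      using covers_walk_site(1)[of k] walk_site_in_diff by (auto simp: touching_def)
    then show ?case by (rule r_into_trancl)
  next
    case (step1 j)
    from step1(2) touching_walk_site_succ[of j] show ?case by (rule trancl_into_trancl)
  next
    case (step2 j)
    have "(walk_site j, walk_site (j - 1)) \<in> touching (sym_diff M M')"
      using touching_walk_site_succ[of "j - 1"] by (auto simp: touching_def)
    with step2(2) show ?case by (rule trancl_into_trancl)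
  qed
  then show "range walk_site \<subseteq> (touching (sym_diff M M'))\<^sup>+ `` {walk_site k}" by auto
qed

lemma same_parity_if_return_without_monomer:
  assumes "v a = v b" "a \<le> b" "\<And>k. a \<le> k \<Longrightarrow> k < b \<Longrightarrow> \<not> monomer_at k"
  shows "even a = even b"
  using even_vertex_alternates[OF assms(2,3)] assms(1) by auto

lemma range_walk_site_at_monomer:
  assumes "monomer_at i"
  shows "range walk_site = insert (walk_site i) (range (\<lambda>n. walk_site (i + 1 + int n)))"
proof (intro equalityI subsetI)
  fix t assume "t \<in> range walk_site"
  then obtain j where t: "t = walk_site j" by blast
  have "j = i \<or> (\<exists>n. j = i + 1 + int n) \<or> (\<exists>n. j = i - 1 - int n)" by presburger
  then show "t \<in> insert (walk_site i) (range (\<lambda>n. walk_site (i + 1 + int n)))"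
    using walk_site_reflect_at_monomer[OF assms] t by auto
qed auto

end

locale ground_state_walk = alternating_walk M M' v
  for M M' :: "'d::finite site set" and v +
  fixes J :: "'d site \<Rightarrow> real"
  assumes generic: "generic J" and ground_state_M: "ground_state J M"
    and ground_state_M': "ground_state J M'"
begin

lemma infinite_range: "infinite (range v)"
proof
  assume "finite (range v)"
  moreover have "range walk_site \<subseteq> sym_diff M M'" using walk_site_in_diff by blast
  ultimately have "range walk_site = {}"
    using ground_states_no_finite_closed_diff[OF generic ground_state_M ground_state_M']
      finite_walk_sites walk_sites_closed by blast
  then show False by simp
qed

lemma eq_if_return_same_parity:
  assumes "v a = v b" "even a = even b" shows "a = b"
proof (rule ccontr)
  assume "a \<noteq> b"
  then have "finite (range v)"
    using finite_range_if_return[of a b] finite_range_if_return[of b a] assms by (cases "a < b") auto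
  with infinite_range show False by blast
qed

lemma monomer_unique:
  assumes "monomer_at i" "monomer_at j" shows "i = j"
proof (rule ccontr)
  assume "i \<noteq> j"
  then have "finite (range v)"
    using finite_range_if_two_monomers assms by (cases "i < j") auto
  with infinite_range show False by blast
qed

lemma inj_on_if_no_monomer_between:
  assumes "\<And>a b k. a \<in> S \<Longrightarrow> b \<in> S \<Longrightarrow> a \<le> k \<Longrightarrow> k < b \<Longrightarrow> \<not> monomer_at k"
  shows "inj_on v S"
proof (rule inj_onI)
  fix a b assume ab: "a \<in> S" "b \<in> S" "v a = v b"
  have "even a = even b"
  proof (cases "a \<le> b")
    case True
    then show ?thesis using same_parity_if_return_without_monomer[of a b] ab assms by blast
  next
    case False
    then show ?thesis using same_parity_if_return_without_monomer[of b a] ab assms by force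
  qed
  then show "a = b" using eq_if_return_same_parity ab(3) by blast
qed

lemma biinf_path_if_no_monomer:
  assumes "\<And>i. \<not> monomer_at i" shows "biinf_path (range walk_site)"
proof -
  have "inj v" by (rule inj_on_if_no_monomer_between) (use assms in blast)
  moreover have "walk_site i = Inr {v i, v (i + 1)}" "adj (v i) (v (i + 1))" for i
    using walk_site_edge[OF assms] by blast+
  ultimately show ?thesis unfolding biinf_path_def by (intro exI[of _ v]) auto
qed

lemma simple_inf_path_if_monomer:
  assumes "monomer_at i" shows "simple_inf_path (range walk_site)"
proof -
  define u where "u n = v (i + 1 + int n)" for n
  have edge: "walk_site (i + 1 + int n) = Inr {u n, u (Suc n)} \<and> adj (u n) (u (Suc n))" for n
    using walk_site_edge[of "i + 1 + int n"] monomer_unique[OF assms, of "i + 1 + int n"]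
    by (auto simp: u_def add.assoc)
  have inj_v: "inj_on v {i<..}"
    by (rule inj_on_if_no_monomer_between) (auto dest: monomer_unique[OF assms])
  have "inj u"
  proof (rule injI)
    fix m n assume "u m = u n"
    then have "i + 1 + int m = i + 1 + int n" unfolding u_def by (rule inj_onD[OF inj_v]) auto
    then show "m = n" by simp
  qed
  moreover have "range walk_site = {Inl (u 0)} \<union> range (\<lambda>n. Inr {u n, u (Suc n)})"
    using range_walk_site_at_monomer[OF assms] walk_site_monomer[OF assms] edge by (simp add: u_def)
  ultimately show ?thesis unfolding simple_inf_path_def using edge by blast
qed

lemma walk_sites_path: "simple_inf_path (range walk_site) \<or> biinf_path (range walk_site)"
  using simple_inf_path_if_monomer biinf_path_if_no_monomer by blast

end

lemma alternating_walk_through_site: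
  fixes M M' :: "'d::finite site set"
  assumes M: "is_matching M" and M': "is_matching M'" and s: "s \<in> sym_diff M M'"
  obtains v where "alternating_walk M M' v" "s \<in> range (alternating_walk.walk_site M M' v)"
proof -
  obtain w where w: "covers s w"
    using s matching_subset_Sigma[OF M] matching_subset_Sigma[OF M'] Sigma_site_covers by blast
  have s_cover: "s = cover_site M w \<or> s = cover_site M' w"
    using s cover_site_unique[OF M _ w] cover_site_unique[OF M' _ w] by blast
  then have differ: "cover_site M w \<noteq> cover_site M' w"
    using s cover_site_in[OF M, of w] cover_site_in[OF M', of w] by auto
  have "partner (if even i then M else M') (partner (if even i then M else M') x) = x" for i x
    using partner_partner[OF M] partner_partner[OF M'] by simp
  then obtain v :: "int \<Rightarrow> 'd vtx"
    where v0: "v 0 = w" and step: "\<forall>i. v (i + 1) = partner (if even i then M else M') (v i)"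
    using involution_walk_exists[of "\<lambda>i. partner (if even i then M else M')" w] by blast
  then interpret alternating_walk M M' v
    using M M' by unfold_locales (simp_all add: step v0 differ)
  show thesis
    using that[OF alternating_walk_axioms] cover_site_in_walk_sites[of 0] s_cover unfolding v0 by blast
qed

lemma ground_states_touching_class_path:
  assumes "generic J" "ground_state J M" "ground_state J M'" "s \<in> sym_diff M M'"
  shows "simple_inf_path ((touching (sym_diff M M'))\<^sup>+ `` {s}) \<or>
         biinf_path ((touching (sym_diff M M'))\<^sup>+ `` {s})"
proof -
  obtain v where "alternating_walk M M' v" and s: "s \<in> range (alternating_walk.walk_site M M' v)"
    using alternating_walk_through_site[of M M' s] assms(2-4) unfolding ground_state_def by blast
  then interpret ground_state_walk M M' v J
    by (simp add: ground_state_walk_def ground_state_walk_axioms_def assms)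
  show ?thesis using s touching_class_walk_sites walk_sites_path by auto
qed

theorem lemma4p1:
  fixes J :: "'d::finite site \<Rightarrow> real" and M M' :: "'d site set"
  assumes "generic J"
    and "ground_state J M" and "ground_state J M'"
  shows "\<exists>\<P>. pairwise disjnt \<P> \<and> \<Union>\<P> = (M - M') \<union> (M' - M) \<and>
           (\<forall>P\<in>\<P>. simple_inf_path P \<or> biinf_path P)"
proof -
  let ?D = "sym_diff M M'"
  have "?D \<subseteq> Sigma_sites"
    using assms(2,3) matching_subset_Sigma by (auto simp: ground_state_def)
  then have part: "partition_on ?D (?D // (touching ?D)\<^sup>+)"
    by (intro partition_on_quotient equiv_touching_trancl)
  show ?thesis
  proof (intro exI conjI ballI)
    show "pairwise disjnt (?D // (touching ?D)\<^sup>+)" using partition_onD2[OF part] .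
    show "\<Union>(?D // (touching ?D)\<^sup>+) = ?D" using partition_onD1[OF part] by simp
    fix P assume "P \<in> ?D // (touching ?D)\<^sup>+"
    then show "simple_inf_path P \<or> biinf_path P"
      using ground_states_touching_class_path[OF assms] by (auto elim: quotientE)
  qed
qed

end
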